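(* Let $0\le\alpha<1$ and let $f=h+\overline{g}\in\mathcal{P}^{0}_{\mathcal{H}}(\alpha)$ with $h(z)=z+\sum_{n=2}^\infty a_nz^n$, $g(z)=\sum_{n=2}^\infty b_nz^n$. Let $r_f$ be the unique root in $(0,1)$ of $$r+2(1-\alpha)\sum_{n=2}^{\infty}\frac{r^n}{n}=1+2(1-\alpha)\sum_{n=2}^{\infty}\frac{(-1)^{n-1}}{n}.$$ Then $$|z|+\sum_{n=2}^{\infty}(|a_n|+|b_n|)|z|^n\le d(f(0),\partial f(\mathbb{D}))\quad\text{for all } |z|\le r_f.$$ The radius $r_f$ is best possible: for $f_\alpha(z)=z+\sum_{n=2}^{\infty}\frac{2(1-\alpha)}{n}z^n\in\mathcal{P}^{0}_{\mathcal{H}}(\alpha)$, equality holds when $|z|=r_f$, and the inequality fails for every $|z|\in(r_f,1)$.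
   Context: $\mathbb{D}=\{z\in\mathbb{C}:|z|<1\}$. $\mathcal{H}_0$ denotes the class of harmonic functions $f=h+\overline{g}$ on $\mathbb{D}$, where $h,g$ are analytic in $\mathbb{D}$ of the form $h(z)=z+\sum_{n=2}^\infty a_nz^n$ and $g(z)=\sum_{n=2}^\infty b_nz^n$. For $0\le\alpha<1$, $\mathcal{P}^{0}_{\mathcal{H}}(\alpha)$ is the set of $f=h+\overline{g}\in\mathcal{H}_0$ such that $\operatorname{Re}(h'(z)-\alpha)>|g'(z)|$ for all $z\in\mathbb{D}$. For a function $f$ on $\mathbb{D}$, $d(f(0),\partial f(\mathbb{D}))=\inf\{|w-f(0)|: w\in\partial f(\mathbb{D})\}$ is the Euclidean distance from $f(0)$ to the boundary of $f(\mathbb{D})$. *)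

theory Defs
  imports "HOL-Analysis.Analysis"
begin

definition pser :: "(nat \<Rightarrow> complex) \<Rightarrow> complex \<Rightarrow> complex" where
  "pser c z = (\<Sum>n. c n * z ^ n)"

definition harm :: "(nat \<Rightarrow> complex) \<Rightarrow> (nat \<Rightarrow> complex) \<Rightarrow> complex \<Rightarrow> complex" where
  "harm a b z = pser a z + cnj (pser b z)"

definition H0 :: "(nat \<Rightarrow> complex) \<Rightarrow> (nat \<Rightarrow> complex) \<Rightarrow> bool" where
  "H0 a b \<longleftrightarrow> a 0 = 0 \<and> a 1 = 1 \<and> b 0 = 0 \<and> b 1 = 0 \<and>
     (\<forall>z \<in> ball 0 1. summable (\<lambda>n. a n * z ^ n) \<and> summable (\<lambda>n. b n * z ^ n))"

definition PH0 :: "real \<Rightarrow> (nat \<Rightarrow> complex) \<Rightarrow> (nat \<Rightarrow> complex) \<Rightarrow> bool" where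
  "PH0 \<alpha> a b \<longleftrightarrow> H0 a b \<and>
     (\<forall>z \<in> ball 0 1. Re (deriv (pser a) z - of_real \<alpha>) > norm (deriv (pser b) z))"

text \<open>Euclidean distance from f(0) to the boundary of f(D), as an extended real
  (infimum over the empty set is +infinity).\<close>
definition bdist :: "(complex \<Rightarrow> complex) \<Rightarrow> ereal" where
  "bdist f = (INF w \<in> frontier (f ` ball 0 1). ereal (norm (w - f 0)))"

definition rf_eq :: "real \<Rightarrow> real \<Rightarrow> bool" where
  "rf_eq \<alpha> r \<longleftrightarrow>
     r + 2 * (1 - \<alpha>) * (\<Sum>n. r ^ (n + 2) / real (n + 2))
       = 1 + 2 * (1 - \<alpha>) * (\<Sum>n. (-1) ^ (n + 1) / real (n + 2))"

definition rf :: "real \<Rightarrow> real" where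
  "rf \<alpha> = (THE r. 0 < r \<and> r < 1 \<and> rf_eq \<alpha> r)"

definition bohr_sum :: "(nat \<Rightarrow> complex) \<Rightarrow> (nat \<Rightarrow> complex) \<Rightarrow> real \<Rightarrow> real" where
  "bohr_sum a b \<rho> = \<rho> + (\<Sum>n. (norm (a (n + 2)) + norm (b (n + 2))) * \<rho> ^ (n + 2))"

definition fa_coeff :: "real \<Rightarrow> nat \<Rightarrow> complex" where
  "fa_coeff \<alpha> n = (if n = 0 then 0 else if n = 1 then 1 else of_real (2 * (1 - \<alpha>) / real n))"

end

theory Submission
  imports Defs "HOL-Complex_Analysis.Complex_Analysis"
    "HOL-Computational_Algebra.Fundamental_Theorem_Algebra"
begin

text \<open>For \<open>f = h + conj g\<close> in the class and any unimodular \<open>\<epsilon>\<close>, the function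
  \<open>P = (h' + \<epsilon> g' - \<alpha>)/(1 - \<alpha>)\<close> has positive real part and \<open>P(0) = 1\<close>. Carath\'eodory's
  coefficient bound, with \<open>\<epsilon>\<close> aligning \<open>a\<^sub>n\<close> and \<open>b\<^sub>n\<close>, gives
  \<open>|a\<^sub>n| + |b\<^sub>n| \<le> 2(1 - \<alpha>)/n\<close>, so the Bohr sum at \<open>r\<close> is at most \<open>f\<^sub>\<alpha>(r)\<close>.
  Carath\'eodory's growth bound, with \<open>\<epsilon>\<close> chosen against \<open>g'\<close>, gives
  \<open>Re h' - |g'| \<ge> \<alpha> + (1 - \<alpha>)(1 - |z|)/(1 + |z|) = f\<^sub>\<alpha>'(-|z|)\<close>; integrating along radii
  yields \<open>|f(z)| \<ge> -f\<^sub>\<alpha>(-|z|)\<close>. As \<open>Re h' > |g'|\<close>, \<open>f\<close> is injective, hence open by invariance of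
  domain, and every boundary point of \<open>f(\<D>)\<close> lies at distance at least \<open>-f\<^sub>\<alpha>(-1)\<close> from \<open>f(0) = 0\<close>.
  The radius \<open>r\<^sub>f\<close> is where \<open>f\<^sub>\<alpha>(r) = -f\<^sub>\<alpha>(-1)\<close>. For \<open>f\<^sub>\<alpha>\<close> itself, \<open>f\<^sub>\<alpha>(-x) \<rightarrow> f\<^sub>\<alpha>(-1)\<close> as
  \<open>x \<rightarrow> 1\<close> exhibits a boundary point at exactly that distance, so both bounds are attained.\<close>

section \<open>The extremal function on the real diameter and the radius\<close>

lemma log_tail_sums:
  fixes x :: real
  assumes "\<bar>x\<bar> < 1"
  shows "(\<lambda>n. x ^ (n + 2) / real (n + 2)) sums (- ln (1 - x) - x)"
proof -
  have "(\<lambda>n. - ((- (- x)) ^ n) / real n) sums ln (1 + (- x))"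
    by (rule ln_series') (use assms in simp)
  hence "(\<lambda>n. x ^ n / real n) sums (- ln (1 - x))"
    using sums_minus by fastforce
  hence "(\<lambda>n. x ^ (n + 2) / real (n + 2)) sums (- ln (1 - x) - (\<Sum>n<2. x ^ n / real n))"
    by (subst sums_iff_shift) simp
  thus ?thesis by (simp add: numeral_2_eq_2)
qed

lemma alternating_harmonic_tail_sums:
  "(\<lambda>n. (-1::real) ^ (n + 1) / real (n + 2)) sums (ln 2 - 1)"
proof -
  have "(\<lambda>n. (-1::real) ^ (n + 1) / real (Suc (n + 1)))
          sums (ln 2 - (\<Sum>n<1. (-1::real) ^ n / real (Suc n)))"
    using alternating_harmonic_series_sums by (subst sums_iff_shift) simp
  thus ?thesis by (simp add: add.commute)
qed

text \<open>The extremal function \<open>f\<^sub>\<alpha>\<close> on the real diameter. Its Bohr sum at \<open>r\<close> is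
  \<open>fa_real \<alpha> r\<close>, and \<open>- fa_real \<alpha> (-1) = 2\<alpha> - 1 + 2(1 - \<alpha>) log 2\<close> is its distance to the boundary.\<close>
definition fa_real :: "real \<Rightarrow> real \<Rightarrow> real" where
  "fa_real \<alpha> x = x + 2 * (1 - \<alpha>) * (- ln (1 - x) - x)"

lemma fa_real_tail_sums:
  assumes "\<bar>x\<bar> < 1"
  shows "(\<lambda>n. 2 * (1 - \<alpha>) * (x ^ (n + 2) / real (n + 2))) sums (fa_real \<alpha> x - x)"
  using sums_mult[OF log_tail_sums[OF assms], of "2 * (1 - \<alpha>)"] by (simp add: fa_real_def)

lemma rf_eq_iff_fa_real:
  assumes "\<bar>r\<bar> < 1"
  shows "rf_eq \<alpha> r \<longleftrightarrow> fa_real \<alpha> r = - fa_real \<alpha> (-1)"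
  using sums_unique[OF log_tail_sums[OF assms]] sums_unique[OF alternating_harmonic_tail_sums]
  unfolding rf_eq_def fa_real_def by (auto simp: algebra_simps)

lemma fa_real_has_derivative:
  assumes "x < 1"
  shows "(fa_real \<alpha> has_real_derivative 1 + 2 * (1 - \<alpha>) * x / (1 - x)) (at x)"
proof -
  have "(fa_real \<alpha> has_real_derivative 1 + 2 * (1 - \<alpha>) * (1 / (1 - x) - 1)) (at x)"
    unfolding fa_real_def using assms by (auto intro!: derivative_eq_intros)
  moreover have "1 / (1 - x) - 1 = x / (1 - x)"
    using assms by (simp add: field_simps)
  ultimately show ?thesis by simp
qed

lemma continuous_on_fa_real: "continuous_on {-1..<1} (fa_real \<alpha>)"
  using fa_real_has_derivative DERIV_isCont by (force intro: continuous_at_imp_continuous_on)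

lemma fa_real_strict_mono:
  assumes "0 \<le> \<alpha>" "\<alpha> < 1" "-1 \<le> x" "x < y" "y < 1"
  shows "fa_real \<alpha> x < fa_real \<alpha> y"
proof (rule DERIV_pos_imp_increasing_open[OF \<open>x < y\<close>])
  fix t assume t: "x < t" "t < y"
  have "0 < 1 + (1 - 2 * \<alpha>) * t"
  proof (cases "0 \<le> t")
    case True
    hence "- t \<le> (1 - 2 * \<alpha>) * t" using mult_right_mono[of "-1" "1 - 2 * \<alpha>" t] assms by simp
    then show ?thesis using t assms by linarith
  next
    case False
    hence "t \<le> (1 - 2 * \<alpha>) * t" using mult_right_mono_neg[of "1 - 2 * \<alpha>" 1 t] assms by simp
    then show ?thesis using t assms by linarith
  qed
  moreover have "1 + 2 * (1 - \<alpha>) * t / (1 - t) = (1 + (1 - 2 * \<alpha>) * t) / (1 - t)"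
    using t assms by (simp add: field_simps)
  ultimately show "\<exists>d. (fa_real \<alpha> has_real_derivative d) (at t) \<and> 0 < d"
    using fa_real_has_derivative[of t \<alpha>] t assms by force
next
  show "continuous_on {x..y} (fa_real \<alpha>)"
    by (rule continuous_on_subset[OF continuous_on_fa_real]) (use assms in auto)
qed

lemma fa_real_le_self:
  assumes "\<alpha> \<le> 1" "0 \<le> x" "x < 1"
  shows "x \<le> fa_real \<alpha> x"
proof -
  have "ln (1 - x) \<le> - x" using ln_le_minus_one[of "1 - x"] assms by simp
  thus ?thesis using assms unfolding fa_real_def by simp
qed

lemma neg_fa_real_neg_has_derivative:
  assumes "0 \<le> s"
  shows "((\<lambda>s. - fa_real \<alpha> (- s)) has_real_derivative \<alpha> + (1 - \<alpha>) * ((1 - s) / (1 + s))) (at s)"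
proof -
  have "((\<lambda>s. - fa_real \<alpha> (- s)) has_real_derivative - ((1 + 2 * (1 - \<alpha>) * (- s) / (1 - (- s))) * (- 1))) (at s)"
    using assms by (intro DERIV_minus DERIV_chain2[OF fa_real_has_derivative]) (auto intro!: derivative_eq_intros)
  moreover have "- ((1 + 2 * (1 - \<alpha>) * (- s) / (1 - (- s))) * (- 1)) = \<alpha> + (1 - \<alpha>) * ((1 - s) / (1 + s))"
    using assms by (simp add: field_simps)
  ultimately show ?thesis by simp
qed

lemma tendsto_neg_fa_real_neg: "((\<lambda>s. - fa_real \<alpha> (- s)) \<longlongrightarrow> - fa_real \<alpha> (-1)) (at_left 1)"
proof -
  have "isCont (fa_real \<alpha>) (-1)" by (rule DERIV_isCont[OF fa_real_has_derivative]) simp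
  moreover have "((\<lambda>s. - s) \<longlongrightarrow> - 1) (at_left (1::real))" by (intro tendsto_intros)
  ultimately have "((\<lambda>s. fa_real \<alpha> (- s)) \<longlongrightarrow> fa_real \<alpha> (-1)) (at_left 1)"
    by (rule isCont_tendsto_compose)
  thus ?thesis by (rule tendsto_minus)
qed

lemma fa_real_boundary_bounds:
  assumes "0 \<le> \<alpha>" "\<alpha> < 1"
  shows "0 < - fa_real \<alpha> (-1)" "- fa_real \<alpha> (-1) < 1"
proof -
  have eq: "- fa_real \<alpha> (-1) = 1 - 2 * ((1 - \<alpha>) * (1 - ln 2))"
    by (simp add: fa_real_def algebra_simps)
  have "2/3 \<le> ln (2::real)" by (rule ln2_ge_two_thirds)
  moreover have "ln (2::real) < 1" using ln2_le_25_over_36 by simp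
  ultimately have "0 < (1 - \<alpha>) * (1 - ln 2)" "(1 - \<alpha>) * (1 - ln 2) \<le> 1 * (1/3)"
    using assms by (simp, intro mult_mono) auto
  thus "0 < - fa_real \<alpha> (-1)" "- fa_real \<alpha> (-1) < 1" unfolding eq by linarith+
qed

lemma rf_eq_ex1:
  assumes "0 \<le> \<alpha>" "\<alpha> < 1"
  shows "\<exists>!r. 0 < r \<and> r < 1 \<and> rf_eq \<alpha> r"
proof -
  define L where "L = - fa_real \<alpha> (-1)"
  define s where "s = (1 + L) / 2"
  have L: "0 < L" "L < 1" using fa_real_boundary_bounds[OF assms] by (auto simp: L_def)
  hence s: "L < s" "s < 1" by (auto simp: s_def)
  have "L \<le> fa_real \<alpha> s" using fa_real_le_self[of \<alpha> s] s L assms by auto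
  moreover have "continuous_on {0..s} (fa_real \<alpha>)"
    by (rule continuous_on_subset[OF continuous_on_fa_real]) (use s in auto)
  ultimately obtain r where r: "0 \<le> r" "r \<le> s" "fa_real \<alpha> r = L"
    using IVT'[of "fa_real \<alpha>" 0 L s] L s by (auto simp: fa_real_def)
  have "r \<noteq> 0" using r L by (auto simp: fa_real_def)
  hence root: "0 < r \<and> r < 1 \<and> rf_eq \<alpha> r"
    using r s rf_eq_iff_fa_real[of r \<alpha>] by (auto simp: L_def)
  have "y = r" if "0 < y \<and> y < 1 \<and> rf_eq \<alpha> y" for y
    using that root rf_eq_iff_fa_real fa_real_strict_mono[OF assms, of y r]
      fa_real_strict_mono[OF assms, of r y] by (cases y r rule: linorder_cases) auto
  with root show ?thesis by blast
qed

lemma rf_root: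
  assumes "0 \<le> \<alpha>" "\<alpha> < 1"
  shows "0 < rf \<alpha>" "rf \<alpha> < 1" "fa_real \<alpha> (rf \<alpha>) = - fa_real \<alpha> (-1)"
proof -
  have "0 < rf \<alpha> \<and> rf \<alpha> < 1 \<and> rf_eq \<alpha> (rf \<alpha>)"
    unfolding rf_def by (rule theI'[OF rf_eq_ex1[OF assms]])
  thus "0 < rf \<alpha>" "rf \<alpha> < 1" "fa_real \<alpha> (rf \<alpha>) = - fa_real \<alpha> (-1)"
    using rf_eq_iff_fa_real by auto
qed

section \<open>Power series on the disc and Carath\'eodory functions\<close>

definition converges_on_disc :: "(nat \<Rightarrow> complex) \<Rightarrow> bool" where
  "converges_on_disc c \<longleftrightarrow> (\<forall>z \<in> ball 0 1. summable (\<lambda>n. c n * z ^ n))"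

lemma converges_on_disc_sums:
  "converges_on_disc c \<Longrightarrow> norm z < 1 \<Longrightarrow> (\<lambda>n. c n * z ^ n) sums pser c z"
  unfolding converges_on_disc_def pser_def by (simp add: summable_sums)

lemma has_field_derivative_pser:
  assumes "converges_on_disc c" "norm z < 1"
  shows "(pser c has_field_derivative pser (diffs c) z) (at z)"
  unfolding pser_def by (rule termdiffs_strong'[of 1]) (use assms in \<open>auto simp: converges_on_disc_def\<close>)

lemma converges_on_disc_diffs: "converges_on_disc c \<Longrightarrow> converges_on_disc (diffs c)"
  unfolding converges_on_disc_def by (auto intro: termdiff_converges[of _ 1])

lemma holomorphic_on_pser:
  assumes "converges_on_disc c"
  shows "pser c holomorphic_on ball 0 1"
  unfolding holomorphic_on_open[OF open_ball]
proof
  fix z :: complex assume "z \<in> ball 0 1"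
  hence "(pser c has_field_derivative pser (diffs c) z) (at z)"
    using has_field_derivative_pser[OF assms] by simp
  thus "\<exists>f'. (pser c has_field_derivative f') (at z)" by blast
qed

lemma deriv_pser: "converges_on_disc c \<Longrightarrow> norm z < 1 \<Longrightarrow> deriv (pser c) z = pser (diffs c) z"
  by (rule DERIV_imp_deriv[OF has_field_derivative_pser])

lemma pser_0 [simp]: "pser c 0 = c 0"
  unfolding pser_def by (rule powser_zero)

lemma Re_Cayley_ge:
  fixes w :: complex
  assumes "norm w < 1"
  shows "(1 - norm w) / (1 + norm w) \<le> Re ((1 + w) / (1 - w))"
proof -
  have "Re ((1 + w) / (1 - w)) = ((1 + Re w) * (1 - Re w) - Im w * Im w) / (norm (1 - w))\<^sup>2"
    by (simp add: Re_divide')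
  also have "(1 + Re w) * (1 - Re w) - Im w * Im w = (1 - norm w) * (1 + norm w)"
    by (simp add: cmod_power2 algebra_simps flip: power2_eq_square)
  finally have eq: "Re ((1 + w) / (1 - w)) = (1 - norm w) * (1 + norm w) / (norm (1 - w))\<^sup>2" .
  have "norm (1 - w) \<le> 1 + norm w" using norm_triangle_ineq4[of 1 w] by simp
  hence "(norm (1 - w))\<^sup>2 \<le> (1 + norm w)\<^sup>2" by (intro power_mono) auto
  moreover have "0 < (norm (1 - w))\<^sup>2" using assms by auto
  moreover have pos: "0 < 1 + norm w" by (simp add: add_pos_nonneg)
  ultimately have "(1 - norm w) * (1 + norm w) / (1 + norm w)\<^sup>2 \<le> Re ((1 + w) / (1 - w))"
    unfolding eq using assms by (intro divide_left_mono mult_pos_pos) auto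
  thus ?thesis using pos by (simp add: power2_eq_square)
qed

lemma Cayley_transform_Schwarz:
  assumes "P holomorphic_on ball 0 1" "\<forall>z\<in>ball 0 1. 0 < Re (P z)" "P 0 = 1"
  shows "(\<lambda>z. (P z - 1) / (P z + 1)) holomorphic_on ball 0 1"
    and "norm z < 1 \<Longrightarrow> norm ((P z - 1) / (P z + 1)) < 1"
    and "norm z < 1 \<Longrightarrow> P z + 1 \<noteq> 0"
proof -
  have Re: "0 < Re (P z)" if "norm z < 1" for z using assms(2) that by simp
  show nz: "P z + 1 \<noteq> 0" if "norm z < 1" for z
  proof -
    have "0 < Re (P z + 1)" using Re[OF that] by simp
    thus ?thesis by (metis less_irrefl zero_complex.sel(1))
  qed
  show "(\<lambda>z. (P z - 1) / (P z + 1)) holomorphic_on ball 0 1"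
    using assms(1) nz by (intro holomorphic_intros) auto
  show "norm ((P z - 1) / (P z + 1)) < 1" if "norm z < 1"
  proof -
    have "norm (P z - 1) < norm (P z + 1)"
      using Re[OF that] by (simp add: cmod_def power2_eq_square algebra_simps)
    thus ?thesis using nz[OF that] by (simp add: norm_divide)
  qed
qed

lemma Caratheodory_Re_ge:
  assumes "P holomorphic_on ball 0 1" "\<forall>z\<in>ball 0 1. 0 < Re (P z)" "P 0 = 1" "norm z < 1"
  shows "(1 - norm z) / (1 + norm z) \<le> Re (P z)"
proof -
  define w where "w = (\<lambda>z. (P z - 1) / (P z + 1))"
  note Cayley = Cayley_transform_Schwarz[OF assms(1-3), folded w_def]
  have w_le: "norm (w z) \<le> norm z"
    by (rule Schwarz_Lemma(1)[OF Cayley(1)]) (use assms Cayley in \<open>auto simp: w_def\<close>)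
  have "1 - w z = 2 / (P z + 1)" "1 + w z = 2 * P z / (P z + 1)"
    using Cayley(3)[OF assms(4)] by (simp_all add: w_def field_simps)
  hence "P z = (1 + w z) / (1 - w z)"
    using Cayley(3)[OF assms(4)] by simp
  hence "(1 - norm (w z)) / (1 + norm (w z)) \<le> Re (P z)"
    using Re_Cayley_ge[OF Cayley(2)[OF assms(4)]] by (simp add: w_def)
  moreover have "(1 - norm z) / (1 + norm z) \<le> (1 - norm (w z)) / (1 + norm (w z))"
  proof -
    have "2 / (1 + norm z) \<le> 2 / (1 + norm (w z))"
      using w_le by (intro divide_left_mono) (auto simp: add_pos_nonneg)
    moreover have "(1 - t) / (1 + t) = 2 / (1 + t) - 1" if "0 \<le> t" for t :: real
      using that by (simp add: field_simps)
    ultimately show ?thesis by simp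
  qed
  ultimately show ?thesis by linarith
qed

lemma Caratheodory_deriv_bound:
  assumes "P holomorphic_on ball 0 1" "\<forall>z\<in>ball 0 1. 0 < Re (P z)" "P 0 = 1"
  shows "norm (deriv P 0) \<le> 2"
proof -
  define w where "w = (\<lambda>z. (P z - 1) / (P z + 1))"
  note Cayley = Cayley_transform_Schwarz[OF assms, folded w_def]
  have "norm (deriv w 0) \<le> 1"
    by (rule Schwarz_Lemma(2)[OF Cayley(1), of 0]) (use assms Cayley in \<open>auto simp: w_def\<close>)
  moreover have "(P has_field_derivative deriv P 0) (at 0)"
    by (rule holomorphic_derivI[OF assms(1)]) auto
  hence "(w has_field_derivative deriv P 0 / 2) (at 0)"
    unfolding w_def by (auto intro!: derivative_eq_intros simp: assms(3))
  hence "deriv w 0 = deriv P 0 / 2" by (rule DERIV_imp_deriv)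
  ultimately show ?thesis by (simp add: norm_divide)
qed

lemma sum_powers_root_of_unity:
  assumes "0 < k"
  defines "\<omega> \<equiv> exp (2 * of_real pi * \<i> / of_nat k)"
  shows "(\<Sum>j<k. (\<omega> ^ m) ^ j) = (if k dvd m then of_nat k else 0)"
proof -
  have \<omega>m: "\<omega> ^ m = exp (2 * of_real pi * \<i> * of_nat m / of_nat k)"
    unfolding \<omega>_def exp_of_nat_mult[symmetric] by (rule arg_cong[where f = exp]) simp
  show ?thesis
  proof (cases "k dvd m")
    case True
    then have "\<omega> ^ m = 1" using complex_root_unity_eq_1[of k m] assms(1) by (simp add: \<omega>m)
    then show ?thesis using True by simp
  next
    case False
    then have "\<omega> ^ m \<noteq> 1" using complex_root_unity_eq_1[of k m] assms(1) by (simp add: \<omega>m)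
    moreover have "(\<omega> ^ m) ^ k = 1" using complex_root_unity[of k m] assms(1) by (simp add: \<omega>m)
    ultimately show ?thesis using False by (simp add: geometric_sum)
  qed
qed

text \<open>Multisection: averaging \<open>P\<close> over the \<open>k\<close>-th roots of unity keeps exactly the
  coefficients of index divisible by \<open>k\<close>.\<close>
lemma pser_multisection_sums:
  assumes "converges_on_disc c" "0 < k" "norm z < 1"
  defines "\<omega> \<equiv> exp (2 * of_real pi * \<i> / of_nat k)"
  shows "(\<lambda>i. c (i * k) * (z ^ k) ^ i) sums ((\<Sum>j<k. pser c (\<omega> ^ j * z)) / of_nat k)"
proof -
  define g where "g = (\<lambda>m. if k dvd m then c m * z ^ m else 0)"
  have norm_\<omega>: "norm (\<omega> ^ j) = 1" for j
    unfolding \<omega>_def by (simp add: norm_power)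
  have "(\<lambda>m. \<Sum>j<k. c m * (\<omega> ^ j * z) ^ m) sums (\<Sum>j<k. pser c (\<omega> ^ j * z))"
    using assms(1,3) norm_\<omega> by (intro sums_sum converges_on_disc_sums) (auto simp: norm_mult)
  moreover have "(\<Sum>j<k. c m * (\<omega> ^ j * z) ^ m) = of_nat k * g m" for m
  proof -
    have "(\<Sum>j<k. c m * (\<omega> ^ j * z) ^ m) = c m * z ^ m * (\<Sum>j<k. (\<omega> ^ m) ^ j)"
      by (simp add: sum_distrib_left power_mult_distrib mult_ac flip: power_mult)
    also have "\<dots> = of_nat k * g m"
      unfolding \<omega>_def sum_powers_root_of_unity[OF assms(2)] by (simp add: g_def)
    finally show ?thesis .
  qed
  ultimately have "(\<lambda>m. of_nat k * g m) sums (\<Sum>j<k. pser c (\<omega> ^ j * z))"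
    by simp
  hence "g sums ((\<Sum>j<k. pser c (\<omega> ^ j * z)) / of_nat k)"
    using sums_divide[of _ _ "of_nat k"] assms(2) by fastforce
  moreover have "strict_mono (\<lambda>i. i * k)" using assms(2) by (intro strict_monoI) simp
  moreover have "g m = 0" if "m \<notin> range (\<lambda>i. i * k)" for m
    using that by (auto simp: g_def elim!: dvdE)
  ultimately have "(\<lambda>i. g (i * k)) sums ((\<Sum>j<k. pser c (\<omega> ^ j * z)) / of_nat k)"
    using sums_mono_reindex by blast
  moreover have "g (i * k) = c (i * k) * (z ^ k) ^ i" for i
    by (simp add: g_def power_mult mult.commute[of i k])
  ultimately show ?thesis by simp
qed

lemma Caratheodory_coeff_bound:
  assumes "converges_on_disc c" "\<forall>z\<in>ball 0 1. 0 < Re (pser c z)" "c 0 = 1" "1 \<le> k"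
  shows "norm (c k) \<le> 2"
proof -
  define \<omega> where "\<omega> = exp (2 * of_real pi * \<i> / of_nat k)"
  define d where "d = (\<lambda>i. c (i * k))"
  \<comment> \<open>The multisection \<open>d\<close> is again a Carath\'eodory function, with first coefficient \<open>c k\<close>.\<close>
  have "(\<lambda>i. d i * \<zeta> ^ i) sums pser d \<zeta> \<and> 0 < Re (pser d \<zeta>)" if "norm \<zeta> < 1" for \<zeta>
  proof -
    obtain z where z: "z ^ k = \<zeta>" using nth_root_exists[of k \<zeta>] assms(4) by auto
    have "norm z ^ k < 1" using that by (simp add: z[symmetric] norm_power)
    hence "norm z < 1" using assms(4) by (metis linorder_not_less one_le_power)
    hence sums: "(\<lambda>i. d i * \<zeta> ^ i) sums ((\<Sum>j<k. pser c (\<omega> ^ j * z)) / of_nat k)"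
      using pser_multisection_sums[OF assms(1), of k z] assms(4) by (simp add: d_def z \<omega>_def)
    have "0 < (\<Sum>j<k. Re (pser c (\<omega> ^ j * z)))"
      using assms(2,4) \<open>norm z < 1\<close> by (intro sum_pos) (auto simp: \<omega>_def norm_mult norm_power lessThan_empty_iff)
    hence "0 < Re ((\<Sum>j<k. pser c (\<omega> ^ j * z)) / of_nat k)"
      using assms(4) by (simp add: Re_sum Re_divide_of_nat)
    with sums show ?thesis by (simp add: pser_def sums_iff)
  qed
  hence conv: "converges_on_disc d" and pos: "\<forall>z\<in>ball 0 1. 0 < Re (pser d z)"
    by (auto simp: converges_on_disc_def sums_iff)
  have "norm (deriv (pser d) 0) \<le> 2"
    by (rule Caratheodory_deriv_bound[OF holomorphic_on_pser[OF conv] pos]) (simp add: d_def assms(3))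
  moreover have "deriv (pser d) 0 = c k"
    using deriv_pser[OF conv, of 0] by (simp add: diffs_def d_def)
  ultimately show ?thesis by simp
qed

section \<open>Harmonic maps with dominant analytic part\<close>

lemma harmonic_segment_derivative:
  fixes h g :: "complex \<Rightarrow> complex"
  assumes "(h has_field_derivative h') (at (p + of_real t * u))"
    and "(g has_field_derivative g') (at (p + of_real t * u))"
  obtains y where
    "((\<lambda>s. Re (cnj u * (h (p + of_real s * u) + cnj (g (p + of_real s * u))))) has_real_derivative y) (at t)"
    "(norm u)\<^sup>2 * (Re h' - norm g') \<le> y"
proof
  have path: "((\<lambda>s. p + of_real s * u) has_vector_derivative u) (at t)"
    by (auto intro!: derivative_eq_intros)
  have "((\<lambda>s. cnj u * (h (p + of_real s * u) + cnj (g (p + of_real s * u))))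
          has_vector_derivative cnj u * (u * h' + cnj (u * g'))) (at t)"
    using field_vector_diff_chain_at[OF path assms(1)] field_vector_diff_chain_at[OF path assms(2)]
    by (intro has_vector_derivative_mult_right has_vector_derivative_add has_vector_derivative_cnj)
      (simp_all add: o_def)
  thus "((\<lambda>s. Re (cnj u * (h (p + of_real s * u) + cnj (g (p + of_real s * u)))))
          has_real_derivative Re (cnj u * (u * h' + cnj (u * g')))) (at t)"
    by (rule has_field_derivative_Re)
  have "cnj u * (u * h') = of_real ((norm u)\<^sup>2) * h'"
    by (subst complex_norm_square) (simp add: algebra_simps)
  hence "Re (cnj u * (u * h')) = (norm u)\<^sup>2 * Re h'" by (simp only:) simp
  moreover have "\<bar>Re (cnj u * cnj (u * g'))\<bar> \<le> (norm u)\<^sup>2 * norm g'"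
    using abs_Re_le_cmod[of "cnj u * cnj (u * g')"] by (simp add: norm_mult power2_eq_square)
  ultimately show "(norm u)\<^sup>2 * (Re h' - norm g') \<le> Re (cnj u * (u * h' + cnj (u * g')))"
    by (simp add: distrib_left right_diff_distrib)
qed

text \<open>A harmonic map whose analytic part dominates its co-analytic part is injective on
  convex domains: along the segment from \<open>z\<^sub>1\<close> to \<open>z\<^sub>2\<close>, the projection of \<open>f\<close> onto the
  direction \<open>z\<^sub>2 - z\<^sub>1\<close> is strictly increasing.\<close>
lemma inj_on_harmonic_if_Re_deriv_gt:
  fixes h g :: "complex \<Rightarrow> complex"
  assumes "open S" "convex S" "h holomorphic_on S" "g holomorphic_on S"
    and "\<forall>z\<in>S. norm (deriv g z) < Re (deriv h z)"
  shows "inj_on (\<lambda>z. h z + cnj (g z)) S"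
proof (rule inj_onI, rule ccontr)
  fix z1 z2 assume z: "z1 \<in> S" "z2 \<in> S" and eq: "h z1 + cnj (g z1) = h z2 + cnj (g z2)"
    and "z1 \<noteq> z2"
  define u where "u = z2 - z1"
  define f where "f = (\<lambda>z. h z + cnj (g z))"
  define \<phi> where "\<phi> = (\<lambda>s. Re (cnj u * f (z1 + of_real s * u)))"
  have "\<phi> 0 < \<phi> 1"
  proof (rule DERIV_pos_imp_increasing[OF zero_less_one])
    fix t :: real assume t: "0 \<le> t" "t \<le> 1"
    have "z1 + of_real t * u = (1 - t) *\<^sub>R z1 + t *\<^sub>R z2"
      by (simp add: u_def scaleR_conv_of_real algebra_simps)
    hence p: "z1 + of_real t * u \<in> S" using convexD[OF assms(2) z, of "1 - t" t] t by simp
    obtain y where y: "(\<phi> has_real_derivative y) (at t)"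
      "(norm u)\<^sup>2 * (Re (deriv h (z1 + of_real t * u)) - norm (deriv g (z1 + of_real t * u))) \<le> y"
      using harmonic_segment_derivative[OF holomorphic_derivI[OF assms(3,1) p]
          holomorphic_derivI[OF assms(4,1) p]] unfolding \<phi>_def f_def by blast
    moreover have "0 < (norm u)\<^sup>2 * (Re (deriv h (z1 + of_real t * u)) - norm (deriv g (z1 + of_real t * u)))"
      using assms(5) p \<open>z1 \<noteq> z2\<close> by (simp add: u_def)
    ultimately show "\<exists>y. (\<phi> has_real_derivative y) (at t) \<and> 0 < y" by force
  qed
  moreover have "f z1 = f z2" using eq by (simp add: f_def)
  hence "\<phi> 0 = \<phi> 1" by (simp add: \<phi>_def u_def)
  ultimately show False by simp
qed

lemma harmonic_norm_ge_radial_integral: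
  fixes h g :: "complex \<Rightarrow> complex" and \<phi> \<phi>' :: "real \<Rightarrow> real"
  assumes "h holomorphic_on ball 0 1" "g holomorphic_on ball 0 1"
    and "\<And>s. 0 \<le> s \<Longrightarrow> s < 1 \<Longrightarrow> (\<phi> has_real_derivative \<phi>' s) (at s)"
    and "\<And>z. norm z < 1 \<Longrightarrow> \<phi>' (norm z) \<le> Re (deriv h z) - norm (deriv g z)"
    and "norm z < 1"
  shows "\<phi> (norm z) - \<phi> 0 \<le> norm (h z + cnj (g z) - (h 0 + cnj (g 0)))"
proof (cases "z = 0")
  case False
  define r where "r = norm z"
  have r: "0 < r" "r < 1" using False assms(5) by (auto simp: r_def)
  define F where "F = (\<lambda>w. h w + cnj (g w))"
  define \<psi> where "\<psi> = (\<lambda>s. Re (cnj z * F (0 + of_real s * z)) - r * \<phi> (s * r))"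
  have der: "\<exists>y. (\<psi> has_real_derivative y) (at t) \<and> 0 \<le> y" if t: "0 \<le> t" "t \<le> 1" for t
  proof -
    have norm_p: "norm (0 + of_real t * z) = t * r" using t by (simp add: norm_mult r_def)
    moreover have tr: "t * r < 1" using t r mult_left_le_one_le[of r t] by linarith
    ultimately have p: "0 + of_real t * z \<in> ball 0 1" by simp
    obtain y where y: "((\<lambda>s. Re (cnj z * F (0 + of_real s * z))) has_real_derivative y) (at t)"
      "r\<^sup>2 * (Re (deriv h (0 + of_real t * z)) - norm (deriv g (0 + of_real t * z))) \<le> y"
      using harmonic_segment_derivative[OF holomorphic_derivI[OF assms(1) open_ball p]
          holomorphic_derivI[OF assms(2) open_ball p]] unfolding r_def F_def by blast
    have "(\<phi> has_real_derivative \<phi>' (t * r)) (at (t * r))" using assms(3) t r tr by simp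
    moreover have "((\<lambda>s. s * r) has_real_derivative r) (at t)"
      by (auto intro!: derivative_eq_intros)
    ultimately have "((\<lambda>s. r * \<phi> (s * r)) has_real_derivative r * (\<phi>' (t * r) * r)) (at t)"
      by (intro DERIV_cmult DERIV_chain2[where g = "\<lambda>s. s * r"])
    from DERIV_diff[OF y(1) this]
    have d\<psi>: "(\<psi> has_real_derivative y - r * (\<phi>' (t * r) * r)) (at t)" by (simp only: \<psi>_def)
    have "\<phi>' (t * r) \<le> Re (deriv h (0 + of_real t * z)) - norm (deriv g (0 + of_real t * z))"
      using assms(4)[of "0 + of_real t * z"] tr unfolding norm_p by simp
    hence "r\<^sup>2 * \<phi>' (t * r) \<le> r\<^sup>2 * (Re (deriv h (0 + of_real t * z)) - norm (deriv g (0 + of_real t * z)))"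
      by (rule mult_left_mono) simp
    moreover have "r * (\<phi>' (t * r) * r) = r\<^sup>2 * \<phi>' (t * r)" by (simp add: power2_eq_square)
    ultimately have "0 \<le> y - r * (\<phi>' (t * r) * r)" using y(2) by linarith
    with d\<psi> show ?thesis by blast
  qed
  have "\<psi> 0 \<le> \<psi> 1"
  proof (rule DERIV_nonneg_imp_increasing_open[of 0 1])
    show "continuous_on {0..1} \<psi>"
      using der by (intro DERIV_atLeastAtMost_imp_continuous_on) blast
  qed (use der in auto)
  moreover have "\<psi> 1 - \<psi> 0 = Re (cnj z * (F z - F 0)) - r * (\<phi> r - \<phi> 0)"
    by (simp add: \<psi>_def right_diff_distrib)
  ultimately have "r * (\<phi> r - \<phi> 0) \<le> Re (cnj z * (F z - F 0))" by linarith
  also have "\<dots> \<le> r * norm (F z - F 0)"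
    using complex_Re_le_cmod[of "cnj z * (F z - F 0)"] by (simp only: norm_mult complex_mod_cnj r_def)
  finally show ?thesis using r by (simp add: r_def F_def)
qed simp

text \<open>If \<open>|F z| \<ge> m(|z|)\<close> and \<open>m\<close> increases to \<open>L\<close>, then the image of a small closed disc
  captures every image point of modulus below \<open>L\<close>, so no such point lies on the frontier.\<close>
lemma frontier_image_norm_ge:
  fixes F :: "complex \<Rightarrow> 'a::real_normed_vector"
  assumes "continuous_on (ball 0 1) F" "open (F ` ball 0 1)"
    and "mono_on {0..<1} m" "(m \<longlongrightarrow> L) (at_left 1)"
    and "\<And>z. norm z < 1 \<Longrightarrow> m (norm z) \<le> norm (F z)"
    and "w \<in> frontier (F ` ball 0 1)"
  shows "L \<le> norm w"
proof (rule ccontr)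
  assume "\<not> L \<le> norm w"
  hence "eventually (\<lambda>r. norm w < m r) (at_left (1::real))"
    by (intro order_tendstoD(1)[OF assms(4)]) simp
  hence "eventually (\<lambda>r. norm w < m r \<and> r \<in> {0<..<1}) (at_left (1::real))"
    using eventually_at_left_real[of 0 1] by (intro eventually_conj) simp_all
  then obtain r where r: "norm w < m r" "0 < r" "r < 1"
    using eventually_happens'[OF trivial_limit_at_left_real] by force
  have "w \<in> closure (F ` cball 0 r)"
    unfolding closure_approachable
  proof (intro allI impI)
    fix e :: real assume "0 < e"
    hence "0 < min e (m r - norm w)" using r(1) by simp
    moreover have "w \<in> closure (F ` ball 0 1)" using assms(6) by (simp add: frontier_def)
    ultimately obtain y where y: "y \<in> F ` ball 0 1" "dist y w < min e (m r - norm w)"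
      unfolding closure_approachable by blast
    then obtain z where z: "norm z < 1" "y = F z" by auto
    have "norm z \<le> r"
    proof (rule ccontr)
      assume "\<not> norm z \<le> r"
      hence "m r \<le> norm (F z)"
        using mono_onD[OF assms(3), of r "norm z"] assms(5)[OF z(1)] r z(1) by auto
      thus False using y(2) z(2) norm_triangle_ineq2[of y w] by (simp add: dist_norm)
    qed
    thus "\<exists>y\<in>F ` cball 0 r. dist y w < e" using y(2) z(2) by auto
  qed
  moreover have "compact (F ` cball 0 r)"
    using r by (intro compact_continuous_image continuous_on_subset[OF assms(1)]) auto
  ultimately have "w \<in> F ` ball 0 1" using r by (auto simp: compact_imp_closed)
  thus False using assms(2,6) by (simp add: frontier_def interior_open)
qed

text \<open>An injective continuous map of the disc is a homeomorphism onto its (open) image, so a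
  path leaving the disc is mapped to a path converging to the frontier of the image.\<close>
lemma tendsto_frontier_image:
  fixes F :: "complex \<Rightarrow> complex"
  assumes "continuous_on (ball 0 1) F" "inj_on F (ball 0 1)"
    and "G \<noteq> bot" "eventually (\<lambda>x. \<gamma> x \<in> ball 0 1) G" "(\<gamma> \<longlongrightarrow> \<zeta>) G" "\<zeta> \<notin> ball 0 1"
    and "((\<lambda>x. F (\<gamma> x)) \<longlongrightarrow> w) G"
  shows "w \<in> frontier (F ` ball 0 1)"
proof -
  define U where "U = F ` ball 0 1"
  have "open U" unfolding U_def by (rule invariance_of_domain[OF assms(1) open_ball assms(2)])
  have "eventually (\<lambda>x. F (\<gamma> x) \<in> closure U) G"
    using assms(4) by eventually_elim (auto simp: U_def intro: closure_subset[THEN subsetD])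
  hence "w \<in> closure U" by (rule Lim_in_closed_set[OF closed_closure _ assms(3,7)])
  moreover have "w \<notin> U"
  proof
    assume "w \<in> U"
    then obtain z where z: "z \<in> ball 0 1" "w = F z" by (auto simp: U_def)
    define g where "g = inv_into (ball 0 1) F"
    have gF: "g (F x) = x" if "x \<in> ball 0 1" for x
      using assms(2) that by (simp add: g_def)
    have "continuous_on U g"
      unfolding U_def by (rule continuous_on_inverse_open[OF open_ball assms(1) _ gF]) auto
    moreover have "eventually (\<lambda>x. F (\<gamma> x) \<in> U) G"
      using assms(4) by eventually_elim (auto simp: U_def)
    ultimately have "((\<lambda>x. g (F (\<gamma> x))) \<longlongrightarrow> g w) G"
      using continuous_on_tendsto_compose[OF _ assms(7) \<open>w \<in> U\<close>] by blast
    moreover have "g w = z" using gF z by simp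
    ultimately have "((\<lambda>x. g (F (\<gamma> x))) \<longlongrightarrow> z) G" by simp
    moreover have "eventually (\<lambda>x. g (F (\<gamma> x)) = \<gamma> x) G"
      using assms(4) by eventually_elim (rule gF)
    ultimately have "(\<gamma> \<longlongrightarrow> z) G" by (rule Lim_transform_eventually)
    hence "\<zeta> = z" using tendsto_unique[OF assms(3,5)] by simp
    thus False using z(1) assms(6) by simp
  qed
  ultimately show ?thesis using \<open>open U\<close> by (simp add: U_def frontier_def interior_open)
qed

section \<open>The class \<open>\<P>\<^sup>0\<^sub>\<H>(\<alpha>)\<close>\<close>

lemma PH0_D:
  assumes "PH0 \<alpha> a b"
  shows "converges_on_disc a" "converges_on_disc b"
    and "a 0 = 0" "a 1 = 1" "b 0 = 0" "b 1 = 0"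
    and "norm z < 1 \<Longrightarrow> norm (deriv (pser b) z) < Re (deriv (pser a) z) - \<alpha>"
  using assms unfolding PH0_def H0_def converges_on_disc_def by auto

lemma harm_0: "PH0 \<alpha> a b \<Longrightarrow> harm a b 0 = 0"
  by (simp add: harm_def PH0_D)

lemma continuous_on_harm: "PH0 \<alpha> a b \<Longrightarrow> continuous_on (ball 0 1) (harm a b)"
  unfolding harm_def
  by (intro continuous_intros holomorphic_on_imp_continuous_on holomorphic_on_pser) (auto dest: PH0_D)

lemma inj_on_harm:
  assumes "PH0 \<alpha> a b" "0 \<le> \<alpha>"
  shows "inj_on (harm a b) (ball 0 1)"
  unfolding harm_def[abs_def] using assms PH0_D[OF assms(1)]
  by (intro inj_on_harmonic_if_Re_deriv_gt holomorphic_on_pser) force+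

lemma exists_unimodular_rotation:
  fixes u y :: complex
  assumes "norm u = 1"
  obtains \<epsilon> where "norm \<epsilon> = 1" "\<epsilon> * y = of_real (norm y) * u"
proof (cases "y = 0")
  case False
  show ?thesis
  proof
    show "norm (u * cnj y / of_real (norm y)) = 1" using assms False by (simp add: norm_mult norm_divide)
    have "cnj y * y = of_real ((norm y)\<^sup>2)" by (subst complex_norm_square) (rule mult.commute)
    thus "u * cnj y / of_real (norm y) * y = of_real (norm y) * u"
      using False by (simp add: power2_eq_square field_simps)
  qed
qed (use assms in auto)

text \<open>Coefficients of \<open>P = (h' + \<epsilon> g' - \<alpha>)/(1 - \<alpha>)\<close>, a Carath\'eodory function for every
  unimodular \<open>\<epsilon>\<close>.\<close>
definition rotated_coeffs :: "real \<Rightarrow> (nat \<Rightarrow> complex) \<Rightarrow> (nat \<Rightarrow> complex) \<Rightarrow> complex \<Rightarrow> nat \<Rightarrow> complex" where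
  "rotated_coeffs \<alpha> a b \<epsilon> m =
     (diffs a m + \<epsilon> * diffs b m - (if m = 0 then of_real \<alpha> else 0)) / of_real (1 - \<alpha>)"

lemma PH0_rotated_Caratheodory:
  assumes "PH0 \<alpha> a b" "\<alpha> < 1" "norm \<epsilon> = 1"
  shows "converges_on_disc (rotated_coeffs \<alpha> a b \<epsilon>)" "rotated_coeffs \<alpha> a b \<epsilon> 0 = 1"
    and "norm z < 1 \<Longrightarrow> pser (rotated_coeffs \<alpha> a b \<epsilon>) z
           = (deriv (pser a) z + \<epsilon> * deriv (pser b) z - of_real \<alpha>) / of_real (1 - \<alpha>)"
    and "\<forall>z\<in>ball 0 1. 0 < Re (pser (rotated_coeffs \<alpha> a b \<epsilon>) z)"
proof -
  note ab = PH0_D[OF assms(1)]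
  have sums: "(\<lambda>m. rotated_coeffs \<alpha> a b \<epsilon> m * z ^ m)
      sums ((deriv (pser a) z + \<epsilon> * deriv (pser b) z - of_real \<alpha>) / of_real (1 - \<alpha>))"
    if "norm z < 1" for z
  proof -
    have "(\<lambda>m. (diffs a m * z ^ m + \<epsilon> * (diffs b m * z ^ m) - (if m = 0 then of_real \<alpha> else 0)) / of_real (1 - \<alpha>))
            sums ((pser (diffs a) z + \<epsilon> * pser (diffs b) z - of_real \<alpha>) / of_real (1 - \<alpha>))"
      using that ab(1,2)
      by (intro sums_divide sums_diff sums_add sums_mult converges_on_disc_sums converges_on_disc_diffs sums_single)
    moreover have "rotated_coeffs \<alpha> a b \<epsilon> m * z ^ m
        = (diffs a m * z ^ m + \<epsilon> * (diffs b m * z ^ m) - (if m = 0 then of_real \<alpha> else 0)) / of_real (1 - \<alpha>)"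
      for m by (auto simp: rotated_coeffs_def algebra_simps add_divide_distrib diff_divide_distrib)
    ultimately show ?thesis using that ab(1,2) by (simp add: deriv_pser)
  qed
  thus "converges_on_disc (rotated_coeffs \<alpha> a b \<epsilon>)"
    by (auto simp: converges_on_disc_def sums_iff)
  show val: "pser (rotated_coeffs \<alpha> a b \<epsilon>) w
           = (deriv (pser a) w + \<epsilon> * deriv (pser b) w - of_real \<alpha>) / of_real (1 - \<alpha>)"
    if "norm w < 1" for w
    using sums[OF that] by (simp add: pser_def sums_iff)
  show "rotated_coeffs \<alpha> a b \<epsilon> 0 = 1"
    using ab(4,6) assms(2) by (simp add: rotated_coeffs_def diffs_def)
  show "\<forall>z\<in>ball 0 1. 0 < Re (pser (rotated_coeffs \<alpha> a b \<epsilon>) z)"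
  proof
    fix z :: complex assume "z \<in> ball 0 1"
    hence z: "norm z < 1" by simp
    have "- norm (deriv (pser b) z) \<le> Re (\<epsilon> * deriv (pser b) z)"
      using abs_Re_le_cmod[of "\<epsilon> * deriv (pser b) z"] assms(3) by (simp add: norm_mult)
    hence "0 < Re (deriv (pser a) z + \<epsilon> * deriv (pser b) z - of_real \<alpha>)" using ab(7)[OF z] by simp
    thus "0 < Re (pser (rotated_coeffs \<alpha> a b \<epsilon>) z)"
      using assms(2) by (simp add: val[OF z] Re_divide_of_real)
  qed
qed

lemma PH0_coeff_bound:
  assumes "PH0 \<alpha> a b" "\<alpha> < 1" "2 \<le> n"
  shows "norm (a n) + norm (b n) \<le> 2 * (1 - \<alpha>) / real n"
proof -
  define u where "u = (if a n = 0 then 1 else sgn (a n))"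
  have u: "norm u = 1" "a n = of_real (norm (a n)) * u"
    by (simp_all add: u_def norm_sgn sgn_eq norm_divide)
  obtain \<epsilon> where \<epsilon>: "norm \<epsilon> = 1" "\<epsilon> * b n = of_real (norm (b n)) * u"
    using exists_unimodular_rotation[OF u(1)] by blast
  have norm_sum: "norm (a n + \<epsilon> * b n) = norm (a n) + norm (b n)"
    by (subst \<epsilon>(2), subst u(2)) (simp add: norm_mult u(1) flip: distrib_right of_real_add)
  note P = PH0_rotated_Caratheodory[OF assms(1,2) \<epsilon>(1)]
  have "norm (rotated_coeffs \<alpha> a b \<epsilon> (n - 1)) \<le> 2"
    by (rule Caratheodory_coeff_bound[OF P(1,4,2)]) (use assms in simp)
  moreover have "rotated_coeffs \<alpha> a b \<epsilon> (n - 1) = of_nat n * (a n + \<epsilon> * b n) / of_real (1 - \<alpha>)"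
    using assms(3) by (simp add: rotated_coeffs_def diffs_def algebra_simps)
  moreover have "norm (1 - complex_of_real \<alpha>) = 1 - \<alpha>"
    using assms(2) by (metis abs_of_pos diff_gt_0_iff_gt norm_of_real of_real_1 of_real_diff)
  ultimately have "real n * (norm (a n) + norm (b n)) / (1 - \<alpha>) \<le> 2"
    using assms(2) by (simp add: norm_mult norm_divide norm_sum)
  thus ?thesis using assms(2,3) by (simp add: field_simps)
qed

lemma PH0_Re_deriv_ge:
  assumes "PH0 \<alpha> a b" "\<alpha> < 1" "norm z < 1"
  shows "\<alpha> + (1 - \<alpha>) * ((1 - norm z) / (1 + norm z)) \<le> Re (deriv (pser a) z) - norm (deriv (pser b) z)"
proof -
  obtain \<epsilon> where \<epsilon>: "norm \<epsilon> = 1" "\<epsilon> * deriv (pser b) z = of_real (norm (deriv (pser b) z)) * (- 1)"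
    using exists_unimodular_rotation[of "- 1"] by auto
  note P = PH0_rotated_Caratheodory[OF assms(1,2) \<epsilon>(1)]
  have "(1 - norm z) / (1 + norm z) \<le> Re (pser (rotated_coeffs \<alpha> a b \<epsilon>) z)"
    by (rule Caratheodory_Re_ge[OF holomorphic_on_pser[OF P(1)] P(4)]) (use P(2) assms(3) in auto)
  also have "Re (pser (rotated_coeffs \<alpha> a b \<epsilon>) z) = (Re (deriv (pser a) z) - norm (deriv (pser b) z) - \<alpha>) / (1 - \<alpha>)"
    using \<epsilon>(2) by (simp add: P(3)[OF assms(3)] Re_divide_of_real)
  finally show ?thesis using assms(2) by (simp add: field_simps)
qed

lemma PH0_norm_harm_ge:
  assumes "PH0 \<alpha> a b" "\<alpha> < 1" "norm z < 1"
  shows "- fa_real \<alpha> (- norm z) \<le> norm (harm a b z)"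
proof -
  have "- fa_real \<alpha> (- norm z) - (- fa_real \<alpha> (- 0)) \<le> norm (pser a z + cnj (pser b z) - (pser a 0 + cnj (pser b 0)))"
    using PH0_D[OF assms(1)] PH0_Re_deriv_ge[OF assms(1,2)] neg_fa_real_neg_has_derivative assms(3)
    by (intro harmonic_norm_ge_radial_integral[where \<phi>' = "\<lambda>s. \<alpha> + (1 - \<alpha>) * ((1 - s) / (1 + s))"] holomorphic_on_pser)
      auto
  thus ?thesis using PH0_D[OF assms(1)] by (simp add: harm_def fa_real_def)
qed

lemma bohr_sum_le_fa_real:
  assumes "PH0 \<alpha> a b" "\<alpha> < 1" "0 \<le> r" "r < 1"
  shows "bohr_sum a b r \<le> fa_real \<alpha> r"
proof -
  have tail: "(\<lambda>n. 2 * (1 - \<alpha>) * (r ^ (n + 2) / real (n + 2))) sums (fa_real \<alpha> r - r)"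
    by (rule fa_real_tail_sums) (use assms in auto)
  have le: "(norm (a (n + 2)) + norm (b (n + 2))) * r ^ (n + 2) \<le> 2 * (1 - \<alpha>) * (r ^ (n + 2) / real (n + 2))" for n
    using mult_right_mono[OF PH0_coeff_bound[OF assms(1,2), of "n + 2"], of "r ^ (n + 2)"] assms(3)
    by simp
  have "summable (\<lambda>n. (norm (a (n + 2)) + norm (b (n + 2))) * r ^ (n + 2))"
    by (rule summable_comparison_test[OF _ sums_summable[OF tail]]) (use le assms(3) in auto)
  hence "(\<Sum>n. (norm (a (n + 2)) + norm (b (n + 2))) * r ^ (n + 2)) \<le> fa_real \<alpha> r - r"
    using le tail by (intro sums_le[OF _ summable_sums]) auto
  thus ?thesis by (simp add: bohr_sum_def)
qed

lemma PH0_bdist_ge: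
  assumes "PH0 \<alpha> a b" "0 \<le> \<alpha>" "\<alpha> < 1"
  shows "ereal (- fa_real \<alpha> (-1)) \<le> bdist (harm a b)"
  unfolding bdist_def harm_0[OF assms(1)]
proof (rule INF_greatest)
  fix w assume w: "w \<in> frontier (harm a b ` ball 0 1)"
  have "open (harm a b ` ball 0 1)"
    by (rule invariance_of_domain[OF continuous_on_harm[OF assms(1)] open_ball inj_on_harm[OF assms(1,2)]])
  moreover have "mono_on {0..<1} (\<lambda>s. - fa_real \<alpha> (- s))"
  proof (rule mono_onI)
    fix x y :: real assume "x \<in> {0..<1}" "y \<in> {0..<1}" "x \<le> y"
    thus "- fa_real \<alpha> (- x) \<le> - fa_real \<alpha> (- y)"
      using fa_real_strict_mono[OF assms(2,3), of "- y" "- x"] by (cases "x = y") auto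
  qed
  ultimately have "- fa_real \<alpha> (-1) \<le> norm w"
    using frontier_image_norm_ge[OF continuous_on_harm[OF assms(1)] _ _ tendsto_neg_fa_real_neg
        PH0_norm_harm_ge[OF assms(1,3)] w] by blast
  thus "ereal (- fa_real \<alpha> (-1)) \<le> ereal (norm (w - 0))" by simp
qed

lemma PH0_Bohr_inequality:
  assumes "PH0 \<alpha> a b" "0 \<le> \<alpha>" "\<alpha> < 1" "0 \<le> r" "r \<le> rf \<alpha>"
  shows "ereal (bohr_sum a b r) \<le> bdist (harm a b)"
proof -
  note rf = rf_root[OF assms(2,3)]
  have "bohr_sum a b r \<le> fa_real \<alpha> r"
    using assms rf by (intro bohr_sum_le_fa_real) auto
  also have "\<dots> \<le> fa_real \<alpha> (rf \<alpha>)"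
    using fa_real_strict_mono[OF assms(2,3), of r "rf \<alpha>"] assms(4,5) rf by (cases "r = rf \<alpha>") auto
  also have "\<dots> = - fa_real \<alpha> (-1)" by (rule rf(3))
  finally have "ereal (bohr_sum a b r) \<le> ereal (- fa_real \<alpha> (-1))" by simp
  also have "\<dots> \<le> bdist (harm a b)" by (rule PH0_bdist_ge[OF assms(1-3)])
  finally show ?thesis .
qed

section \<open>Sharpness: the extremal function\<close>

lemma norm_fa_coeff:
  assumes "\<alpha> \<le> 1" "2 \<le> n"
  shows "norm (fa_coeff \<alpha> n) = 2 * (1 - \<alpha>) / real n"
proof -
  have "fa_coeff \<alpha> n = of_real (2 * (1 - \<alpha>) / real n)" using assms(2) by (simp add: fa_coeff_def)
  thus ?thesis using assms(1) by (simp only: norm_of_real) simp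
qed

lemma bohr_sum_fa_coeff:
  assumes "\<alpha> \<le> 1" "\<bar>r\<bar> < 1"
  shows "bohr_sum (fa_coeff \<alpha>) (\<lambda>_. 0) r = fa_real \<alpha> r"
proof -
  have "(\<lambda>n. (norm (fa_coeff \<alpha> (n + 2)) + norm (0 :: complex)) * r ^ (n + 2))
      = (\<lambda>n. 2 * (1 - \<alpha>) * (r ^ (n + 2) / real (n + 2)))"
    using norm_fa_coeff[OF assms(1)] by simp
  thus ?thesis
    using sums_unique[OF fa_real_tail_sums[OF assms(2), of \<alpha>]] by (simp add: bohr_sum_def)
qed

lemma fa_coeff_sums_of_real:
  assumes "\<bar>x\<bar> < 1"
  shows "(\<lambda>n. fa_coeff \<alpha> n * of_real x ^ n) sums of_real (fa_real \<alpha> x)"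
proof -
  define f where "f = (\<lambda>n. (if n = 0 then 0 else if n = 1 then 1 else 2 * (1 - \<alpha>) / real n) * x ^ n)"
  have "(\<lambda>n. f (n + 2)) sums (fa_real \<alpha> x - x)"
    using fa_real_tail_sums[OF assms, of \<alpha>] by (simp add: f_def)
  hence "f sums (fa_real \<alpha> x - x + (\<Sum>n<2. f n))" by (subst (asm) sums_iff_shift)
  hence "f sums fa_real \<alpha> x" by (simp add: f_def numeral_2_eq_2)
  moreover have "(\<lambda>n. of_real (f n)) = (\<lambda>n. fa_coeff \<alpha> n * of_real x ^ n)"
    by (auto simp: fun_eq_iff f_def fa_coeff_def of_real_power)
  ultimately show ?thesis using sums_of_real by metis
qed

lemma harm_fa_coeff_of_real:
  "\<bar>x\<bar> < 1 \<Longrightarrow> harm (fa_coeff \<alpha>) (\<lambda>_. 0) (of_real x) = of_real (fa_real \<alpha> x)"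
  using fa_coeff_sums_of_real by (simp add: harm_def pser_def sums_iff)

lemma converges_on_disc_fa_coeff:
  assumes "0 \<le> \<alpha>" "\<alpha> \<le> 1"
  shows "converges_on_disc (fa_coeff \<alpha>)"
  unfolding converges_on_disc_def
proof
  fix z :: complex assume "z \<in> ball 0 1"
  have "norm (fa_coeff \<alpha> n) \<le> 1" for n
  proof (cases "n \<le> 1")
    case False
    hence "2 \<le> real n" by simp
    hence "2 * (1 - \<alpha>) \<le> real n" using assms by (simp add: algebra_simps)
    thus ?thesis using False assms norm_fa_coeff[of \<alpha> n] by simp
  qed (auto simp: fa_coeff_def)
  hence "norm (fa_coeff \<alpha> n * z ^ n) \<le> norm z ^ n" for n
    by (simp add: norm_mult norm_power mult_left_le_one_le)
  thus "summable (\<lambda>n. fa_coeff \<alpha> n * z ^ n)"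
    using \<open>z \<in> ball 0 1\<close> by (intro summable_comparison_test'[OF summable_geometric]) auto
qed

lemma deriv_pser_fa_coeff:
  assumes "0 \<le> \<alpha>" "\<alpha> \<le> 1" "norm z < 1"
  shows "deriv (pser (fa_coeff \<alpha>)) z = of_real \<alpha> + of_real (1 - \<alpha>) * ((1 + z) / (1 - z))"
proof -
  have diffs: "diffs (fa_coeff \<alpha>) n = of_real (2 * (1 - \<alpha>)) + (if n = 0 then of_real (2 * \<alpha> - 1) else 0)" for n
  proof (cases n)
    case (Suc m)
    have "of_nat (Suc n) * fa_coeff \<alpha> (Suc n) = of_real (real (Suc n) * (2 * (1 - \<alpha>) / real (Suc n)))"
      using Suc by (simp only: fa_coeff_def of_real_mult of_real_of_nat_eq) simp
    thus ?thesis using Suc by (simp add: diffs_def)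
  qed (simp add: diffs_def fa_coeff_def)
  have "(\<lambda>n. of_real (2 * (1 - \<alpha>)) * z ^ n + (if n = 0 then of_real (2 * \<alpha> - 1) else 0))
          sums (of_real (2 * (1 - \<alpha>)) * (1 / (1 - z)) + of_real (2 * \<alpha> - 1))"
    using assms(3) by (intro sums_add sums_mult geometric_sums sums_single) simp
  moreover have "(\<lambda>n. diffs (fa_coeff \<alpha>) n * z ^ n)
      = (\<lambda>n. of_real (2 * (1 - \<alpha>)) * z ^ n + (if n = 0 then of_real (2 * \<alpha> - 1) else 0))"
    by (auto simp: diffs algebra_simps)
  ultimately have "pser (diffs (fa_coeff \<alpha>)) z = of_real (2 * (1 - \<alpha>)) * (1 / (1 - z)) + of_real (2 * \<alpha> - 1)"
    by (simp add: pser_def sums_iff)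
  moreover have "1 - z \<noteq> 0" using assms(3) by auto
  ultimately show ?thesis
    using deriv_pser[OF converges_on_disc_fa_coeff[OF assms(1,2)] assms(3)] by (simp add: field_simps)
qed

lemma PH0_fa_coeff:
  assumes "0 \<le> \<alpha>" "\<alpha> < 1"
  shows "PH0 \<alpha> (fa_coeff \<alpha>) (\<lambda>_. 0)"
proof -
  have "0 < Re (deriv (pser (fa_coeff \<alpha>)) z - of_real \<alpha>)" if "norm z < 1" for z
  proof -
    have "0 < (1 - norm z) / (1 + norm z)" using that norm_ge_zero[of z] by (intro divide_pos_pos) linarith+
    also have "\<dots> \<le> Re ((1 + z) / (1 - z))" by (rule Re_Cayley_ge[OF that])
    finally have pos: "0 < (1 - \<alpha>) * Re ((1 + z) / (1 - z))" using assms by simp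
    have "Re (deriv (pser (fa_coeff \<alpha>)) z - of_real \<alpha>) = Re (of_real (1 - \<alpha>) * ((1 + z) / (1 - z)))"
      using assms that by (simp add: deriv_pser_fa_coeff)
    also have "\<dots> = (1 - \<alpha>) * Re ((1 + z) / (1 - z))"
      by (simp only: times_complex.sel Re_complex_of_real Im_complex_of_real)
    finally show ?thesis using pos by simp
  qed
  moreover have "pser (\<lambda>_. 0) = (\<lambda>_. 0)" by (simp add: pser_def fun_eq_iff)
  ultimately show ?thesis
    using converges_on_disc_fa_coeff[of \<alpha>] assms
    by (auto simp: PH0_def H0_def converges_on_disc_def fa_coeff_def)
qed

lemma bdist_fa_coeff:
  assumes "0 \<le> \<alpha>" "\<alpha> < 1"
  shows "bdist (harm (fa_coeff \<alpha>) (\<lambda>_. 0)) = ereal (- fa_real \<alpha> (-1))"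
proof (rule antisym)
  note ph = PH0_fa_coeff[OF assms]
  define F where "F = harm (fa_coeff \<alpha>) (\<lambda>_. 0)"
  have ev: "eventually (\<lambda>x. x \<in> {0<..<1}) (at_left (1::real))"
    by (rule eventually_at_left_real) simp
  have F_neg: "F (- of_real x) = of_real (fa_real \<alpha> (- x))" if "0 < x" "x < 1" for x
    using harm_fa_coeff_of_real[of "- x" \<alpha>] that by (simp add: F_def)
  have "((\<lambda>x. of_real (fa_real \<alpha> (- x)) :: complex) \<longlongrightarrow> of_real (fa_real \<alpha> (-1))) (at_left 1)"
    by (rule tendsto_of_real) (use tendsto_minus[OF tendsto_neg_fa_real_neg[of \<alpha>]] in simp)
  moreover have "eventually (\<lambda>x. of_real (fa_real \<alpha> (- x)) = F (of_real (- x))) (at_left 1)"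
    using ev by eventually_elim (simp add: F_neg)
  ultimately have "((\<lambda>x. F (of_real (- x))) \<longlongrightarrow> of_real (fa_real \<alpha> (-1))) (at_left 1)"
    by (rule Lim_transform_eventually)
  moreover have "eventually (\<lambda>x. complex_of_real (- x) \<in> ball 0 1) (at_left 1)"
    using ev by eventually_elim simp
  moreover have "((\<lambda>x. complex_of_real (- x)) \<longlongrightarrow> - 1) (at_left 1)"
    using tendsto_of_real[OF tendsto_minus[OF tendsto_ident_at[of 1 "{..<1}"]]] by simp
  ultimately have "of_real (fa_real \<alpha> (-1)) \<in> frontier (F ` ball 0 1)"
    using continuous_on_harm[OF ph] inj_on_harm[OF ph assms(1)]
    by (intro tendsto_frontier_image[where \<zeta> = "- 1"]) (simp_all add: F_def)
  hence "bdist F \<le> ereal (norm (of_real (fa_real \<alpha> (-1)) - F 0))"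
    unfolding bdist_def by (rule INF_lower)
  also have "\<dots> = ereal (- fa_real \<alpha> (-1))"
    using fa_real_boundary_bounds[OF assms] harm_0[OF ph] by (simp add: F_def)
  finally show "bdist F \<le> ereal (- fa_real \<alpha> (-1))" .
  show "ereal (- fa_real \<alpha> (-1)) \<le> bdist F"
    unfolding F_def by (rule PH0_bdist_ge[OF ph assms])
qed

theorem theorem2p2:
  fixes \<alpha> :: real and a b :: "nat \<Rightarrow> complex"
  assumes "0 \<le> \<alpha>" "\<alpha> < 1" and "PH0 \<alpha> a b"
  shows "(\<exists>!r. 0 < r \<and> r < 1 \<and> rf_eq \<alpha> r)
    \<and> (\<forall>z::complex. norm z \<le> rf \<alpha> \<longrightarrow> ereal (bohr_sum a b (norm z)) \<le> bdist (harm a b))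
    \<and> PH0 \<alpha> (fa_coeff \<alpha>) (\<lambda>_. 0)
    \<and> (\<forall>z::complex. norm z = rf \<alpha> \<longrightarrow>
          ereal (bohr_sum (fa_coeff \<alpha>) (\<lambda>_. 0) (norm z)) = bdist (harm (fa_coeff \<alpha>) (\<lambda>_. 0)))
    \<and> (\<forall>z::complex. rf \<alpha> < norm z \<and> norm z < 1 \<longrightarrow>
          \<not> ereal (bohr_sum (fa_coeff \<alpha>) (\<lambda>_. 0) (norm z)) \<le> bdist (harm (fa_coeff \<alpha>) (\<lambda>_. 0)))"
proof (intro conjI allI impI)
  note rf = rf_root[OF assms(1,2)] and bdist = bdist_fa_coeff[OF assms(1,2)]
  have bohr_fa: "bohr_sum (fa_coeff \<alpha>) (\<lambda>_. 0) (norm z) = fa_real \<alpha> (norm z)" if "norm z < 1" for z :: complex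
    using that assms(2) by (intro bohr_sum_fa_coeff) auto
  show "\<exists>!r. 0 < r \<and> r < 1 \<and> rf_eq \<alpha> r" by (rule rf_eq_ex1[OF assms(1,2)])
  show "PH0 \<alpha> (fa_coeff \<alpha>) (\<lambda>_. 0)" by (rule PH0_fa_coeff[OF assms(1,2)])
  fix z :: complex
  show "ereal (bohr_sum a b (norm z)) \<le> bdist (harm a b)" if "norm z \<le> rf \<alpha>"
    using that by (intro PH0_Bohr_inequality[OF assms(3,1,2)]) auto
  show "ereal (bohr_sum (fa_coeff \<alpha>) (\<lambda>_. 0) (norm z)) = bdist (harm (fa_coeff \<alpha>) (\<lambda>_. 0))"
    if "norm z = rf \<alpha>" using that bohr_fa[of z] rf bdist by simp
  show "\<not> ereal (bohr_sum (fa_coeff \<alpha>) (\<lambda>_. 0) (norm z)) \<le> bdist (harm (fa_coeff \<alpha>) (\<lambda>_. 0))"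
    if "rf \<alpha> < norm z \<and> norm z < 1"
    using that bohr_fa[of z] rf bdist fa_real_strict_mono[OF assms(1,2), of "rf \<alpha>" "norm z"] by simp
qed

end
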